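(* Let $\mathbb{X}$ be a reflexive Kadets-Klee real Banach space and $\mathbb{Y}$ any real Banach space (both of dimension greater than $1$). Let $T\in\mathbb{K}(\mathbb{X},\mathbb{Y})$ with $\|T\|=1$ be a smooth point of $\mathbb{K}(\mathbb{X},\mathbb{Y})$. Then for each $\epsilon>0$, $T$ admits a uniform $\epsilon$-BPB approximation $A\in\mathbb{L}(\mathbb{X},\mathbb{Y})$ with $A\neq T$.
   Context: $\mathbb{K}(\mathbb{X},\mathbb{Y})$ (resp. $\mathbb{L}(\mathbb{X},\mathbb{Y})$) denotes the compact (resp. bounded) linear operators with the operator norm; $S_{\mathbb{X}}$ is the unit sphere. $\mathbb{X}$ is Kadets-Klee if $x_n\to x$ weakly and $\|x_n\|\to\|x\|$ imply $\|x_n-x\|\to0$. A nonzero element $x$ of a Banach space $\mathbb{Z}$ is a smooth point if there is a unique $f\in\mathbb{Z}^*$ with $\|f\|=1$ and $f(x)=\|x\|$. For $T$ with $\|T\|=1$ and fixed $\epsilon>0$, an operator $A\in\mathbb{L}(\mathbb{X},\mathbb{Y})$ with $\|A\|=1$ is a uniform $\epsilon$-BPB approximation of $T$ if there exists $\delta(\epsilon)>0$ such that whenever $x_0\in S_{\mathbb{X}}$ satisfies $\|Tx_0\|>1-\delta(\epsilon)$, there exists $u_0\in S_{\mathbb{X}}$ with $\|Au_0\|=1$, $\|u_0-x_0\|<\epsilon$ and $\|A-T\|<\epsilon$. Such an $A$ is called nontrivial if $A\neq T$. *)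

theory Defs
  imports "HOL-Analysis.Analysis"
begin

definition compact_op :: "('a::real_normed_vector \<Rightarrow>\<^sub>L 'b::real_normed_vector) \<Rightarrow> bool" where
  "compact_op T \<longleftrightarrow> compact (closure (blinfun_apply T ` cball 0 1))"

definition reflexive_space :: "'a::real_normed_vector itself \<Rightarrow> bool" where
  "reflexive_space _ \<longleftrightarrow>
     (\<forall>\<phi> :: ('a \<Rightarrow>\<^sub>L real) \<Rightarrow>\<^sub>L real. \<exists>x::'a. \<forall>f. blinfun_apply \<phi> f = blinfun_apply f x)"

definition weakly_tendsto :: "(nat \<Rightarrow> 'a::real_normed_vector) \<Rightarrow> 'a \<Rightarrow> bool" where
  "weakly_tendsto xs x \<longleftrightarrow>
     (\<forall>f :: 'a \<Rightarrow>\<^sub>L real. (\<lambda>n. blinfun_apply f (xs n)) \<longlonglongrightarrow> blinfun_apply f x)"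

definition kadets_klee :: "'a::real_normed_vector itself \<Rightarrow> bool" where
  "kadets_klee _ \<longleftrightarrow>
     (\<forall>(xs :: nat \<Rightarrow> 'a) x. weakly_tendsto xs x \<and> (\<lambda>n. norm (xs n)) \<longlonglongrightarrow> norm x
        \<longrightarrow> (\<lambda>n. norm (xs n - x)) \<longlonglongrightarrow> 0)"

definition dim_gt_one :: "'a::real_vector itself \<Rightarrow> bool" where
  "dim_gt_one _ \<longleftrightarrow> (\<exists>x y :: 'a. \<forall>a b. a *\<^sub>R x + b *\<^sub>R y = 0 \<longrightarrow> a = 0 \<and> b = 0)"

definition support_functional :: "'v::real_normed_vector set \<Rightarrow> 'v \<Rightarrow> ('v \<Rightarrow> real) \<Rightarrow> bool" where
  "support_functional S z f \<longleftrightarrow>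
     (\<forall>u\<in>S. \<forall>v\<in>S. \<forall>a b. f (a *\<^sub>R u + b *\<^sub>R v) = a * f u + b * f v) \<and>
     (\<forall>u\<in>S. \<bar>f u\<bar> \<le> norm u) \<and> f z = norm z"

definition smooth_point_in :: "'v::real_normed_vector set \<Rightarrow> 'v \<Rightarrow> bool" where
  "smooth_point_in S z \<longleftrightarrow> z \<in> S \<and> z \<noteq> 0 \<and>
     (\<exists>f. support_functional S z f) \<and>
     (\<forall>f g. support_functional S z f \<and> support_functional S z g \<longrightarrow> (\<forall>u\<in>S. f u = g u))"

definition uniform_BPB_approx ::
    "('a::real_normed_vector \<Rightarrow>\<^sub>L 'b::real_normed_vector) \<Rightarrow> real \<Rightarrow> ('a \<Rightarrow>\<^sub>L 'b) \<Rightarrow> bool" where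
  "uniform_BPB_approx T \<epsilon> A \<longleftrightarrow> norm A = 1 \<and>
     (\<exists>\<delta>>0. \<forall>x0. norm x0 = 1 \<and> norm (blinfun_apply T x0) > 1 - \<delta> \<longrightarrow>
        (\<exists>u0. norm u0 = 1 \<and> norm (blinfun_apply A u0) = 1 \<and> norm (u0 - x0) < \<epsilon> \<and> norm (A - T) < \<epsilon>))"

end

(*
  Smoothness of T in K(X,Y) forces all norming vectors of T to be +x1 or -x1 for a single x1:
  the support functionals S \<mapsto> g (S x) at T must agree on rank-one operators.  Since T is
  compact, the images of a norming sequence have a convergent subsequence; by reflexivity
  (Tychonoff in the bidual) it has weak cluster points, which are norming vectors mapped to
  the limit, hence all equal, so the subsequence converges weakly, and in norm by the
  Kadets--Klee property.  Therefore every almost norming unit vector is uniformly close to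
  +x1 or -x1, and any norm-one A attaining its norm at x1 with norm (A - T) < \<epsilon> is a uniform
  \<epsilon>-BPB approximation of T; such an A \<noteq> T is a rank-one perturbation of T.
*)
theory Submission
  imports Defs
begin

section \<open>Norming functionals\<close>

definition dominated_linear_graph :: "('v::real_normed_vector \<times> real) set \<Rightarrow> bool" where
  "dominated_linear_graph G \<longleftrightarrow>
     (\<forall>u a v b s t. (u, a) \<in> G \<longrightarrow> (v, b) \<in> G \<longrightarrow> (s *\<^sub>R u + t *\<^sub>R v, s * a + t * b) \<in> G) \<and>
     (\<forall>u a. (u, a) \<in> G \<longrightarrow> a \<le> norm u)"

lemma dominated_linear_graph_lincomb:
  "dominated_linear_graph G \<Longrightarrow> (u, a) \<in> G \<Longrightarrow> (v, b) \<in> G \<Longrightarrow> (s *\<^sub>R u + t *\<^sub>R v, s * a + t * b) \<in> G"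
  unfolding dominated_linear_graph_def by blast

lemma dominated_linear_graph_scale:
  "dominated_linear_graph G \<Longrightarrow> (u, a) \<in> G \<Longrightarrow> (s *\<^sub>R u, s * a) \<in> G"
  using dominated_linear_graph_lincomb[of G u a u a s 0] by simp

lemma dominated_linear_graph_le_norm:
  "dominated_linear_graph G \<Longrightarrow> (u, a) \<in> G \<Longrightarrow> a \<le> norm u"
  unfolding dominated_linear_graph_def by blast

lemma dominated_linear_graph_Union_chain:
  assumes C: "C \<in> chains {G. dominated_linear_graph G}"
  shows "dominated_linear_graph (\<Union>C)"
proof -
  have "(s *\<^sub>R u + t *\<^sub>R v, s * a + t * b) \<in> \<Union>C" if uv: "(u, a) \<in> \<Union>C" "(v, b) \<in> \<Union>C" for u a v b s t
  proof -
    obtain X where "X \<in> C" "(u, a) \<in> X" "(v, b) \<in> X"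
      using uv chainsD[OF C] by blast
    thus ?thesis using chainsD2[OF C] dominated_linear_graph_lincomb by blast
  qed
  thus ?thesis
    using chainsD2[OF C] unfolding dominated_linear_graph_def by blast
qed

lemma dominated_linear_graph_extend_by:
  fixes G :: "('v::real_normed_vector \<times> real) set"
  assumes G: "dominated_linear_graph G"
    and lower: "\<And>u a. (u, a) \<in> G \<Longrightarrow> a - norm (u - v0) \<le> c"
    and upper: "\<And>w b. (w, b) \<in> G \<Longrightarrow> c \<le> norm (w + v0) - b"
  shows "dominated_linear_graph {(u + t *\<^sub>R v0, a + t * c) | u a t. (u, a) \<in> G}"
    (is "dominated_linear_graph ?G'")
proof -
  have "(s *\<^sub>R p + t *\<^sub>R q, s * \<alpha> + t * \<beta>) \<in> ?G'" if pq: "(p, \<alpha>) \<in> ?G'" "(q, \<beta>) \<in> ?G'" for p \<alpha> q \<beta> s t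
  proof -
    obtain u1 a1 t1 u2 a2 t2 where h: "(u1, a1) \<in> G" "(u2, a2) \<in> G"
      and p: "p = u1 + t1 *\<^sub>R v0" "\<alpha> = a1 + t1 * c" and q: "q = u2 + t2 *\<^sub>R v0" "\<beta> = a2 + t2 * c"
      using pq by blast
    have "s *\<^sub>R p + t *\<^sub>R q = (s *\<^sub>R u1 + t *\<^sub>R u2) + (s * t1 + t * t2) *\<^sub>R v0"
      "s * \<alpha> + t * \<beta> = (s * a1 + t * a2) + (s * t1 + t * t2) * c"
      unfolding p q by (simp_all add: algebra_simps)
    thus ?thesis using dominated_linear_graph_lincomb[OF G h] by blast
  qed
  moreover have "a + t * c \<le> norm (u + t *\<^sub>R v0)" if "(u, a) \<in> G" for u a t
  proof -
    consider "t = 0" | "t > 0" | "t < 0" by linarith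
    thus ?thesis
    proof cases
      case 1
      thus ?thesis using G that dominated_linear_graph_le_norm by simp
    next
      case 2
      have "t * c \<le> t * (norm (u /\<^sub>R t + v0) - a / t)"
        using upper[OF dominated_linear_graph_scale[OF G that, of "inverse t"]] 2
        by (simp add: divide_inverse mult.commute)
      also have "\<dots> = norm (t *\<^sub>R (u /\<^sub>R t + v0)) - a"
        using 2 by (simp add: right_diff_distrib)
      finally show ?thesis using 2 by (simp add: scaleR_add_right)
    next
      case 3
      have "- t * (a / - t - norm (u /\<^sub>R - t - v0)) \<le> - t * c"
        using lower[OF dominated_linear_graph_scale[OF G that, of "- inverse t"]] 3
        by (intro mult_left_mono) (simp_all add: divide_inverse mult.commute)
      also have "- t * (a / - t - norm (u /\<^sub>R - t - v0)) = a - norm ((- t) *\<^sub>R (u /\<^sub>R - t - v0))"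
        using 3 by (simp add: right_diff_distrib)
      finally show ?thesis using 3 by (simp add: scaleR_diff_right)
    qed
  qed
  ultimately show ?thesis
    unfolding dominated_linear_graph_def by blast
qed

text \<open>The one-dimensional step of Hahn--Banach: the value c at v0 must satisfy
  a - norm (u - v0) \<le> c \<le> norm (w + v0) - b for all (u, a), (w, b) in G,
  and such c exists because G is dominated by the norm.\<close>
lemma dominated_linear_graph_extend:
  fixes G :: "('v::real_normed_vector \<times> real) set"
  assumes G: "dominated_linear_graph G" and zero: "(0, 0) \<in> G" and v0: "\<forall>c. (v0, c) \<notin> G"
  shows "\<exists>G'. dominated_linear_graph G' \<and> G \<subset> G'"
proof -
  define D where "D = {a - norm (u - v0) | u a. (u, a) \<in> G}"
  define c where "c = Sup D"
  define G' where "G' = {(u + t *\<^sub>R v0, a + t * c) | u a t. (u, a) \<in> G}"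
  have key: "a - norm (u - v0) \<le> norm (w + v0) - b" if "(u, a) \<in> G" "(w, b) \<in> G" for u a w b
  proof -
    have "a + b \<le> norm (u + w)"
      using dominated_linear_graph_lincomb[OF G that, of 1 1] G dominated_linear_graph_le_norm by simp
    also have "\<dots> \<le> norm (u - v0) + norm (w + v0)"
      using norm_triangle_ineq[of "u - v0" "w + v0"] by simp
    finally show ?thesis by simp
  qed
  have "bdd_above D"
    unfolding D_def bdd_above_def using key[OF _ zero] by (intro exI[of _ "norm v0"]) auto
  hence "a - norm (u - v0) \<le> c" if "(u, a) \<in> G" for u a
    unfolding c_def using that D_def by (intro cSup_upper) blast+
  moreover have "c \<le> norm (w + v0) - b" if "(w, b) \<in> G" for w b
    unfolding c_def D_def using key zero that by (intro cSup_least) auto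
  ultimately have "dominated_linear_graph G'"
    unfolding G'_def by (rule dominated_linear_graph_extend_by[OF G])
  moreover have "G \<subseteq> G'"
  proof (rule subrelI)
    fix u a assume "(u, a) \<in> G"
    thus "(u, a) \<in> G'" unfolding G'_def by (intro CollectI exI[of _ u] exI[of _ a] exI[of _ 0]) simp
  qed
  moreover have "(v0, c) \<in> G'"
    unfolding G'_def using zero by (intro CollectI exI[of _ 0] exI[of _ 0] exI[of _ 1]) simp
  ultimately show ?thesis using v0 by blast
qed

lemma dominated_linear_graph_functional:
  fixes M :: "('v::real_normed_vector \<times> real) set"
  assumes M: "dominated_linear_graph M" and total: "\<And>v. \<exists>a. (v, a) \<in> M"
  shows "\<exists>g::'v \<Rightarrow>\<^sub>L real. norm g \<le> 1 \<and> (\<forall>v a. (v, a) \<in> M \<longrightarrow> blinfun_apply g v = a)"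
proof -
  have unique: "a = b" if "(v, a) \<in> M" "(v, b) \<in> M" for v a b
  proof -
    have "(0, a - b) \<in> M" "(0, b - a) \<in> M"
      using dominated_linear_graph_lincomb[OF M that, of 1 "-1"]
        dominated_linear_graph_lincomb[OF M that(2,1), of 1 "-1"] by simp_all
    hence "a - b \<le> 0" "b - a \<le> 0"
      using dominated_linear_graph_le_norm[OF M] by fastforce+
    thus ?thesis by simp
  qed
  define g where "g v = (SOME a. (v, a) \<in> M)" for v
  have gM: "(v, g v) \<in> M" for v
    unfolding g_def using total by (rule someI_ex)
  have add: "g (u + v) = g u + g v" for u v
    using unique[OF gM dominated_linear_graph_lincomb[OF M gM[of u] gM[of v], of 1 1]] by simp
  have scale: "g (r *\<^sub>R u) = r *\<^sub>R g u" for r u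
    using unique[OF gM dominated_linear_graph_scale[OF M gM[of u], of r]] by simp
  have bound: "norm (g v) \<le> norm v * 1" for v
    using dominated_linear_graph_le_norm[OF M gM, of v] dominated_linear_graph_le_norm[OF M gM, of "- v"]
      scale[of "-1" v] by simp
  have bl: "bounded_linear g" by (rule bounded_linear_intro[OF add scale bound])
  have "norm (Blinfun g) \<le> 1"
    using bound by (intro norm_blinfun_bound) (auto simp: bounded_linear_Blinfun_apply[OF bl])
  moreover have "blinfun_apply (Blinfun g) v = a" if "(v, a) \<in> M" for v a
    using unique[OF that gM] by (simp add: bounded_linear_Blinfun_apply[OF bl])
  ultimately show ?thesis by blast
qed

theorem exists_norming_functional:
  fixes y :: "'v::real_normed_vector"
  shows "\<exists>g::'v \<Rightarrow>\<^sub>L real. norm g \<le> 1 \<and> blinfun_apply g y = norm y"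
proof -
  define \<G> where "\<G> = {G::('v \<times> real) set. dominated_linear_graph G \<and> (y, norm y) \<in> G}"
  define L where "L = range (\<lambda>t. (t *\<^sub>R y, t * norm y))"
  have "(s *\<^sub>R (t1 *\<^sub>R y) + t *\<^sub>R (t2 *\<^sub>R y), s * (t1 * norm y) + t * (t2 * norm y)) \<in> L" for s t t1 t2
    unfolding L_def by (rule image_eqI[of _ _ "s * t1 + t * t2"]) (simp_all add: algebra_simps)
  moreover have "t * norm y \<le> norm (t *\<^sub>R y)" for t
    by (simp add: mult_right_mono)
  moreover have "(y, norm y) \<in> L"
    unfolding L_def by (rule image_eqI[of _ _ 1]) simp_all
  ultimately have "L \<in> \<G>"
    unfolding \<G>_def dominated_linear_graph_def by (auto simp: L_def)
  have "\<forall>C\<in>chains \<G>. \<exists>U\<in>\<G>. \<forall>X\<in>C. X \<subseteq> U"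
  proof
    fix C assume C: "C \<in> chains \<G>"
    show "\<exists>U\<in>\<G>. \<forall>X\<in>C. X \<subseteq> U"
    proof (cases "C = {}")
      case False
      have "C \<in> chains {G. dominated_linear_graph G}"
        using C unfolding chains_def \<G>_def by blast
      hence "\<Union>C \<in> \<G>"
        using dominated_linear_graph_Union_chain False chainsD2[OF C] unfolding \<G>_def by blast
      thus ?thesis by blast
    qed (use \<open>L \<in> \<G>\<close> in blast)
  qed
  then obtain M where "M \<in> \<G>" and maximal: "\<forall>X\<in>\<G>. M \<subseteq> X \<longrightarrow> X = M"
    by (rule Zorn_Lemma2[THEN bexE])
  hence M: "dominated_linear_graph M" and yM: "(y, norm y) \<in> M" unfolding \<G>_def by auto
  have total: "\<exists>a. (v, a) \<in> M" for v
  proof (rule ccontr)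
    assume "\<not> ?thesis"
    moreover have "(0, 0) \<in> M"
      using dominated_linear_graph_scale[OF M yM, of 0] by simp
    ultimately obtain M' where "dominated_linear_graph M'" "M \<subset> M'"
      using dominated_linear_graph_extend[OF M] by blast
    thus False using maximal yM unfolding \<G>_def by blast
  qed
  obtain g :: "'v \<Rightarrow>\<^sub>L real" where "norm g \<le> 1" "\<forall>v a. (v, a) \<in> M \<longrightarrow> blinfun_apply g v = a"
    using dominated_linear_graph_functional[OF M total] by blast
  thus ?thesis using yM by blast
qed

lemma dual_separates_points:
  fixes y :: "'v::real_normed_vector"
  assumes "\<And>g::'v \<Rightarrow>\<^sub>L real. blinfun_apply g y = 0"
  shows "y = 0"
  using exists_norming_functional[of y] assms by force

section \<open>Weak cluster points in reflexive spaces\<close>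

text \<open>The functionals are tested one at a time, so this is weaker than being a cluster point
  in the weak topology.\<close>
definition weak_cluster_point :: "(nat \<Rightarrow> 'a::real_normed_vector) \<Rightarrow> 'a \<Rightarrow> bool" where
  "weak_cluster_point xs x \<longleftrightarrow>
     (\<forall>f::'a \<Rightarrow>\<^sub>L real. \<forall>e>0. \<exists>\<^sub>F n in sequentially. dist (blinfun_apply f (xs n)) (blinfun_apply f x) < e)"

lemma weak_cluster_pointD:
  fixes f :: "'a::real_normed_vector \<Rightarrow>\<^sub>L real"
  shows "weak_cluster_point xs x \<Longrightarrow> e > 0 \<Longrightarrow>
    \<exists>\<^sub>F n in sequentially. dist (blinfun_apply f (xs n)) (blinfun_apply f x) < e"
  unfolding weak_cluster_point_def by blast

lemma cluster_point_frequently_in: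
  assumes "inf (nhds x) F \<noteq> bot" "open U" "x \<in> U"
  shows "\<exists>\<^sub>F y in F. y \<in> U"
proof (rule ccontr)
  assume "\<not> ?thesis"
  hence "eventually (\<lambda>y. y \<notin> U) F" by (simp add: not_frequently)
  moreover have "eventually (\<lambda>y. y \<in> U) (nhds x)" using assms(2,3) by (rule eventually_nhds_in_open)
  ultimately have "eventually (\<lambda>_. False) (inf (nhds x) F)"
    unfolding eventually_inf by blast
  thus False using assms(1) by (simp add: eventually_False)
qed

lemma cluster_point_mem_closed:
  assumes "inf (nhds x) F \<noteq> bot" "closed C" "eventually (\<lambda>y. y \<in> C) F"
  shows "x \<in> C"
proof (rule ccontr)
  assume "x \<notin> C"
  hence "\<exists>\<^sub>F y in F. y \<in> - C"
    using assms(2) by (intro cluster_point_frequently_in[OF assms(1)]) auto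
  thus False
    using assms(3) by (simp add: frequently_def)
qed

lemma bounded_seq_in_product_has_cluster_point:
  fixes \<Phi> :: "nat \<Rightarrow> 'i \<Rightarrow> real"
  assumes "\<And>n i. \<bar>\<Phi> n i\<bar> \<le> r i"
  shows "\<exists>\<phi>. (\<forall>i. \<bar>\<phi> i\<bar> \<le> r i) \<and> inf (nhds \<phi>) (filtermap \<Phi> sequentially) \<noteq> bot"
proof -
  define K where "K = Pi\<^sub>E UNIV (\<lambda>i. cball (0::real) (r i))"
  have "compactin (product_topology (\<lambda>i. euclidean) UNIV) K"
    unfolding K_def by (simp add: compactin_PiE)
  hence "compact K"
    by (simp add: euclidean_product_topology)
  moreover have "eventually (\<lambda>\<psi>. \<psi> \<in> K) (filtermap \<Phi> sequentially)"
    using assms by (simp add: eventually_filtermap K_def PiE_UNIV_domain Pi_iff dist_real_def)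
  ultimately obtain \<phi> where "\<phi> \<in> K" "inf (nhds \<phi>) (filtermap \<Phi> sequentially) \<noteq> bot"
    unfolding compact_filter by (metis filtermap_bot_iff trivial_limit_sequentially)
  thus ?thesis
    by (intro exI[of _ \<phi>]) (auto simp: K_def PiE_UNIV_domain dist_real_def)
qed

text \<open>The functionals f \<mapsto> f (xs n) have a cluster point \<phi> in the product topology (Tychonoff),
  which is linear because linearity is a closed condition there; by reflexivity \<phi> is
  evaluation at some x.\<close>
lemma reflexive_bounded_weak_cluster_point:
  fixes xs :: "nat \<Rightarrow> 'a::real_normed_vector"
  assumes refl: "reflexive_space TYPE('a)" and bounded: "\<And>n. norm (xs n) \<le> B"
  shows "\<exists>x. weak_cluster_point xs x"
proof -
  define \<Phi> where "\<Phi> n = (\<lambda>f::'a \<Rightarrow>\<^sub>L real. blinfun_apply f (xs n))" for n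
  have "\<bar>\<Phi> n f\<bar> \<le> norm f * B" for n f
    using norm_blinfun[of f "xs n"] mult_left_mono[OF bounded[of n], of "norm f"]
    unfolding \<Phi>_def by simp
  then obtain \<phi> where \<phi>_le: "\<And>f. \<bar>\<phi> f\<bar> \<le> norm f * B"
    and cluster: "inf (nhds \<phi>) (filtermap \<Phi> sequentially) \<noteq> bot"
    using bounded_seq_in_product_has_cluster_point[of \<Phi> "\<lambda>f. norm f * B"] by blast
  have "\<phi> \<in> {\<psi>. \<psi> (f + g) = \<psi> f + \<psi> g}" for f g
    by (rule cluster_point_mem_closed[OF cluster])
      (auto simp: \<Phi>_def blinfun.add_left eventually_filtermap
        intro!: closed_Collect_eq continuous_intros continuous_on_product_coordinates)
  moreover have "\<phi> \<in> {\<psi>. \<psi> (r *\<^sub>R f) = r * \<psi> f}" for r f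
    by (rule cluster_point_mem_closed[OF cluster])
      (auto simp: \<Phi>_def blinfun.scaleR_left eventually_filtermap
        intro!: closed_Collect_eq continuous_intros continuous_on_product_coordinates)
  ultimately have "bounded_linear \<phi>"
    using \<phi>_le by (intro bounded_linear_intro[of _ B]) (auto simp: mult.commute)
  then obtain x where x: "\<And>f. \<phi> f = blinfun_apply f x"
    using refl unfolding reflexive_space_def by (metis bounded_linear_Blinfun_apply)
  have "weak_cluster_point xs x"
    unfolding weak_cluster_point_def
  proof (intro allI impI)
    fix f :: "'a \<Rightarrow>\<^sub>L real" and e :: real assume "e > 0"
    have "open {\<psi>. dist (\<psi> f) (\<phi> f) < e}"
      by (intro open_Collect_less continuous_intros continuous_on_product_coordinates)
    thus "\<exists>\<^sub>F n in sequentially. dist (blinfun_apply f (xs n)) (blinfun_apply f x) < e"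
      using cluster_point_frequently_in[OF cluster] \<open>e > 0\<close>
      by (fastforce simp: frequently_filtermap \<Phi>_def x)
  qed
  thus ?thesis ..
qed

lemma weak_cluster_point_blinfun_apply:
  assumes "weak_cluster_point xs x"
  shows "weak_cluster_point (\<lambda>n. blinfun_apply T (xs n)) (blinfun_apply T x)"
  unfolding weak_cluster_point_def
proof (intro allI impI)
  fix f :: "'b \<Rightarrow>\<^sub>L real" and e :: real assume "e > 0"
  thus "\<exists>\<^sub>F n in sequentially. dist (blinfun_apply f (blinfun_apply T (xs n))) (blinfun_apply f (blinfun_apply T x)) < e"
    using weak_cluster_pointD[OF assms, of e "f o\<^sub>L T"] by simp
qed

lemma weak_cluster_point_tendsto_eq:
  fixes xs :: "nat \<Rightarrow> 'a::real_normed_vector"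
  assumes cluster: "weak_cluster_point xs x" and lim: "xs \<longlonglongrightarrow> y"
  shows "x = y"
proof -
  have "blinfun_apply g x = blinfun_apply g y" for g :: "'a \<Rightarrow>\<^sub>L real"
  proof (rule ccontr)
    define d where "d = dist (blinfun_apply g x) (blinfun_apply g y)"
    assume "blinfun_apply g x \<noteq> blinfun_apply g y"
    hence "d > 0" unfolding d_def by simp
    have "eventually (\<lambda>n. dist (blinfun_apply g (xs n)) (blinfun_apply g y) < d / 2) sequentially"
      using bounded_linear.tendsto[OF blinfun.bounded_linear_right lim] half_gt_zero[OF \<open>d > 0\<close>]
      by (rule tendstoD)
    with weak_cluster_pointD[OF cluster half_gt_zero[OF \<open>d > 0\<close>]]
    have "\<exists>\<^sub>F n in sequentially. dist (blinfun_apply g (xs n)) (blinfun_apply g x) < d / 2 \<and>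
        dist (blinfun_apply g (xs n)) (blinfun_apply g y) < d / 2"
      by (rule frequently_eventually_frequently)
    then obtain n where "dist (blinfun_apply g (xs n)) (blinfun_apply g x) < d / 2"
      "dist (blinfun_apply g (xs n)) (blinfun_apply g y) < d / 2"
      by (auto dest: frequently_ex)
    hence "dist (blinfun_apply g x) (blinfun_apply g y) < d" by (rule dist_triangle_half_r)
    thus False unfolding d_def by simp
  qed
  thus ?thesis using dual_separates_points[of "x - y"] by (simp add: blinfun.diff_right)
qed

lemma weak_cluster_point_norm_le:
  fixes xs :: "nat \<Rightarrow> 'a::real_normed_vector"
  assumes cluster: "weak_cluster_point xs x" and bounded: "\<And>n. norm (xs n) \<le> B"
  shows "norm x \<le> B"
proof (rule ccontr)
  assume "\<not> norm x \<le> B"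
  obtain h :: "'a \<Rightarrow>\<^sub>L real" where h: "norm h \<le> 1" "blinfun_apply h x = norm x"
    using exists_norming_functional by blast
  have "blinfun_apply h (xs n) \<le> B" for n
  proof -
    have "blinfun_apply h (xs n) \<le> norm h * norm (xs n)"
      using norm_blinfun[of h "xs n"] by simp
    also have "\<dots> \<le> 1 * B"
      using h(1) bounded[of n] by (intro mult_mono) auto
    finally show ?thesis by simp
  qed
  moreover have "\<exists>\<^sub>F n in sequentially. dist (blinfun_apply h (xs n)) (blinfun_apply h x) < norm x - B"
    using \<open>\<not> norm x \<le> B\<close> by (intro weak_cluster_pointD[OF cluster]) simp
  then obtain n where "dist (blinfun_apply h (xs n)) (blinfun_apply h x) < norm x - B"
    by (rule frequentlyE)
  ultimately show False
    using h(2) unfolding dist_real_def by (smt (verit))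
qed

text \<open>This replaces the Eberlein--Smulian theorem: weak cluster points of subsequences suffice.\<close>
lemma weakly_tendsto_if_unique_weak_cluster_point:
  fixes xs :: "nat \<Rightarrow> 'a::real_normed_vector"
  assumes refl: "reflexive_space TYPE('a)" and bounded: "\<And>n. norm (xs n) \<le> B"
    and unique: "\<And>r x'. strict_mono r \<Longrightarrow> weak_cluster_point (xs \<circ> r) x' \<Longrightarrow> x' = x"
  shows "weakly_tendsto xs x"
  unfolding weakly_tendsto_def
proof (rule allI, rule ccontr)
  fix f :: "'a \<Rightarrow>\<^sub>L real"
  assume "\<not> (\<lambda>n. blinfun_apply f (xs n)) \<longlonglongrightarrow> blinfun_apply f x"
  then obtain e where "e > 0"
    and not_close: "\<not> eventually (\<lambda>n. dist (blinfun_apply f (xs n)) (blinfun_apply f x) < e) sequentially"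
    unfolding tendsto_iff by blast
  have inf: "infinite {n. \<not> dist (blinfun_apply f (xs n)) (blinfun_apply f x) < e}"
    using not_close unfolding not_eventually cofinite_eq_sequentially[symmetric] frequently_cofinite .
  then obtain r :: "nat \<Rightarrow> nat" where r: "strict_mono r"
    and "\<forall>n. r n \<in> {n. \<not> dist (blinfun_apply f (xs n)) (blinfun_apply f x) < e}"
    using infinite_enumerate[OF inf] by meson
  hence far: "\<not> dist (blinfun_apply f (xs (r n))) (blinfun_apply f x) < e" for n
    by simp
  have "norm ((xs \<circ> r) n) \<le> B" for n
    using bounded by simp
  then obtain x' where cluster: "weak_cluster_point (xs \<circ> r) x'"
    using reflexive_bounded_weak_cluster_point[OF refl] by blast
  hence "x' = x" by (rule unique[OF r])
  hence "\<exists>\<^sub>F n in sequentially. dist (blinfun_apply f (xs (r n))) (blinfun_apply f x) < e"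
    using weak_cluster_pointD[OF cluster \<open>e > 0\<close>, of f] by simp
  thus False using far by (auto dest: frequently_ex)
qed

section \<open>Rank-one operators and smoothness\<close>

definition rank_one :: "('a::real_normed_vector \<Rightarrow>\<^sub>L real) \<Rightarrow> 'b::real_normed_vector \<Rightarrow> 'a \<Rightarrow>\<^sub>L 'b" where
  "rank_one f w = blinfun_scaleR_left w o\<^sub>L f"

lemma rank_one_apply [simp]: "blinfun_apply (rank_one f w) x = blinfun_apply f x *\<^sub>R w"
  by (simp add: rank_one_def)

lemma norm_rank_one_le: "norm (rank_one f w) \<le> norm f * norm w"
proof (rule norm_blinfun_bound)
  fix x
  have "\<bar>blinfun_apply f x\<bar> * norm w \<le> (norm f * norm x) * norm w"
    using norm_blinfun[of f x] by (intro mult_right_mono) auto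
  thus "norm (blinfun_apply (rank_one f w) x) \<le> norm f * norm w * norm x"
    by (simp add: algebra_simps)
qed simp

lemma compact_op_rank_one: "compact_op (rank_one f w)"
proof -
  define K where "K = (\<lambda>t. t *\<^sub>R w) ` {- norm f .. norm f}"
  have "compact K"
    unfolding K_def by (intro compact_continuous_image continuous_intros) simp
  moreover have "blinfun_apply (rank_one f w) ` cball 0 1 \<subseteq> K"
  proof
    fix z assume "z \<in> blinfun_apply (rank_one f w) ` cball 0 1"
    then obtain x where x: "norm x \<le> 1" "z = blinfun_apply f x *\<^sub>R w" by auto
    have "\<bar>blinfun_apply f x\<bar> \<le> norm f * norm x" using norm_blinfun[of f x] by simp
    also have "\<dots> \<le> norm f" using x(1) mult_left_le[of "norm x" "norm f"] by simp
    finally show "z \<in> K" unfolding K_def x(2) by (intro imageI) (simp add: abs_le_iff)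
  qed
  hence "closure (blinfun_apply (rank_one f w) ` cball 0 1) \<subseteq> K"
    using \<open>compact K\<close> by (intro closure_minimal compact_imp_closed)
  hence "closure (blinfun_apply (rank_one f w) ` cball 0 1) = K \<inter> closure (blinfun_apply (rank_one f w) ` cball 0 1)"
    by blast
  thus ?thesis
    unfolding compact_op_def by (metis compact_Int_closed[OF \<open>compact K\<close> closed_closure])
qed

lemma support_functional_evaluation:
  fixes T :: "'a::real_normed_vector \<Rightarrow>\<^sub>L 'b::real_normed_vector" and g :: "'b \<Rightarrow>\<^sub>L real"
  assumes "norm g \<le> 1" "norm x = 1" "blinfun_apply g (blinfun_apply T x) = norm T"
  shows "support_functional S T (\<lambda>S. blinfun_apply g (blinfun_apply S x))"
  unfolding support_functional_def
proof (intro conjI ballI allI)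
  fix u v :: "'a \<Rightarrow>\<^sub>L 'b" and a b :: real
  show "blinfun_apply g (blinfun_apply (a *\<^sub>R u + b *\<^sub>R v) x) =
        a * blinfun_apply g (blinfun_apply u x) + b * blinfun_apply g (blinfun_apply v x)"
    by (simp add: blinfun.add_left blinfun.scaleR_left blinfun.add_right blinfun.scaleR_right)
next
  fix u :: "'a \<Rightarrow>\<^sub>L 'b"
  have "\<bar>blinfun_apply g (blinfun_apply u x)\<bar> \<le> norm g * norm (blinfun_apply u x)"
    using norm_blinfun[of g "blinfun_apply u x"] by simp
  also have "\<dots> \<le> 1 * (norm u * 1)"
    using assms(1,2) norm_blinfun[of u x] by (intro mult_mono) auto
  finally show "\<bar>blinfun_apply g (blinfun_apply u x)\<bar> \<le> norm u" by simp
qed (fact assms(3))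

text \<open>Both evaluations at x1 and at x2 are support functionals at T; testing their equality
  on the rank-one operators f \<otimes> T x1 shows that x1 and x2 are proportional.\<close>
lemma smooth_point_norming_vectors_eq_up_to_sign:
  fixes T :: "'a::real_normed_vector \<Rightarrow>\<^sub>L 'b::real_normed_vector"
  assumes smooth: "smooth_point_in {S. compact_op S} T" and "norm T = 1"
    and x1: "norm x1 = 1" "norm (blinfun_apply T x1) = 1"
    and x2: "norm x2 = 1" "norm (blinfun_apply T x2) = 1"
  shows "x2 = x1 \<or> x2 = - x1"
proof -
  obtain g1 :: "'b \<Rightarrow>\<^sub>L real" where g1: "norm g1 \<le> 1" "blinfun_apply g1 (blinfun_apply T x1) = 1"
    using exists_norming_functional[of "blinfun_apply T x1"] x1 by auto
  obtain g2 :: "'b \<Rightarrow>\<^sub>L real" where g2: "norm g2 \<le> 1" "blinfun_apply g2 (blinfun_apply T x2) = 1"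
    using exists_norming_functional[of "blinfun_apply T x2"] x2 by auto
  have "support_functional {S. compact_op S} T (\<lambda>S. blinfun_apply g1 (blinfun_apply S x1))"
    "support_functional {S. compact_op S} T (\<lambda>S. blinfun_apply g2 (blinfun_apply S x2))"
    using support_functional_evaluation[OF g1(1) x1(1)] support_functional_evaluation[OF g2(1) x2(1)]
      g1(2) g2(2) \<open>norm T = 1\<close> by simp_all
  hence "\<forall>S\<in>{S. compact_op S}. blinfun_apply g1 (blinfun_apply S x1) = blinfun_apply g2 (blinfun_apply S x2)"
    using smooth unfolding smooth_point_in_def by blast
  define c where "c = blinfun_apply g2 (blinfun_apply T x1)"
  have "blinfun_apply f (x1 - c *\<^sub>R x2) = 0" for f :: "'a \<Rightarrow>\<^sub>L real"
  proof -
    have "blinfun_apply g1 (blinfun_apply (rank_one f (blinfun_apply T x1)) x1) =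
        blinfun_apply g2 (blinfun_apply (rank_one f (blinfun_apply T x1)) x2)"
      using \<open>\<forall>S\<in>_. _\<close> compact_op_rank_one by blast
    thus ?thesis using g1(2) by (simp add: c_def blinfun.diff_right blinfun.scaleR_right)
  qed
  hence "x1 = c *\<^sub>R x2"
    using dual_separates_points[of "x1 - c *\<^sub>R x2"] by simp
  moreover from this have "\<bar>c\<bar> = 1" using x1(1) x2(1) by simp
  ultimately show ?thesis by (cases "c = 1") (auto simp: abs_if split: if_splits)
qed

section \<open>Norming sequences of smooth compact operators\<close>

lemma weak_cluster_point_norming_preimage:
  fixes T :: "'a::real_normed_vector \<Rightarrow>\<^sub>L 'b::real_normed_vector"
  assumes "norm T \<le> 1" and cluster: "weak_cluster_point xs x" and bounded: "\<And>n. norm (xs n) \<le> 1"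
    and lim: "(\<lambda>n. blinfun_apply T (xs n)) \<longlonglongrightarrow> y" and "norm y = 1"
  shows "blinfun_apply T x = y" and "norm x = 1"
proof -
  show Tx: "blinfun_apply T x = y"
    using weak_cluster_point_tendsto_eq[OF weak_cluster_point_blinfun_apply[OF cluster] lim] .
  have "1 = norm (blinfun_apply T x)"
    using Tx \<open>norm y = 1\<close> by simp
  also have "\<dots> \<le> norm T * norm x"
    by (rule norm_blinfun)
  also have "\<dots> \<le> norm x"
    using \<open>norm T \<le> 1\<close> by (simp add: mult_left_le_one_le)
  finally show "norm x = 1"
    using weak_cluster_point_norm_le[OF cluster bounded] by simp
qed

lemma exists_almost_norming_vector:
  fixes T :: "'a::real_normed_vector \<Rightarrow>\<^sub>L 'b::real_normed_vector"
  assumes "norm T = 1" "e > 0"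
  shows "\<exists>x. norm x = 1 \<and> 1 - e < norm (blinfun_apply T x)"
proof (rule ccontr)
  assume none: "\<not> ?thesis"
  define e' where "e' = min e (1/2)"
  have "norm T \<le> 1 - e'"
  proof (rule norm_blinfun_bound)
    fix x :: 'a
    show "norm (blinfun_apply T x) \<le> (1 - e') * norm x"
    proof (cases "x = 0")
      case False
      have "norm (blinfun_apply T (x /\<^sub>R norm x)) \<le> 1 - e"
        using none[unfolded not_ex, rule_format, of "x /\<^sub>R norm x"] False by auto
      hence "norm (blinfun_apply T (x /\<^sub>R norm x)) \<le> 1 - e'"
        unfolding e'_def by linarith
      thus ?thesis using False by (simp add: blinfun.scaleR_right field_simps)
    qed simp
  qed (simp add: e'_def)
  thus False using assms e'_def by simp
qed

lemma norm_apply_tendsto_one: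
  fixes T :: "'a::real_normed_vector \<Rightarrow>\<^sub>L 'b::real_normed_vector"
  assumes "norm T = 1" and unit: "\<And>n. norm (xs n) = 1"
    and almost: "\<And>n. 1 - inverse (Suc n) < norm (blinfun_apply T (xs n))"
  shows "(\<lambda>n. norm (blinfun_apply T (xs n))) \<longlonglongrightarrow> 1"
proof (rule real_tendsto_sandwich)
  show "\<forall>\<^sub>F n in sequentially. 1 - inverse (Suc n) \<le> norm (blinfun_apply T (xs n))"
    using almost by (simp add: less_imp_le)
  show "\<forall>\<^sub>F n in sequentially. norm (blinfun_apply T (xs n)) \<le> 1"
  proof (intro always_eventually allI)
    fix n show "norm (blinfun_apply T (xs n)) \<le> 1"
      using norm_blinfun[of T "xs n"] \<open>norm T = 1\<close> unit[of n] by simp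
  qed
  show "(\<lambda>n. 1 - inverse (real (Suc n))) \<longlonglongrightarrow> 1"
    using tendsto_diff[OF tendsto_const LIMSEQ_inverse_real_of_nat, of 1] by simp
qed simp

context
  fixes T :: "'a::real_normed_vector \<Rightarrow>\<^sub>L 'b::real_normed_vector"
  assumes refl: "reflexive_space TYPE('a)" and kk: "kadets_klee TYPE('a)"
    and compact: "compact_op T" and norm_T: "norm T = 1"
    and smooth: "smooth_point_in {S. compact_op S} T"
begin

text \<open>The weak cluster points of all subsequences are norming vectors mapped to y; by smoothness
  they are equal up to sign, and the sign is fixed by y \<noteq> - y.\<close>
lemma norming_sequence_weakly_tendsto:
  assumes unit: "\<And>n. norm (xs n) = 1" and lim: "(\<lambda>n. blinfun_apply T (xs n)) \<longlonglongrightarrow> y"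
    and "norm y = 1"
  shows "\<exists>x. norm x = 1 \<and> blinfun_apply T x = y \<and> weakly_tendsto xs x"
proof -
  have bounded: "norm (xs n) \<le> 1" for n
    using unit by simp
  have preimage: "blinfun_apply T x' = y \<and> norm x' = 1"
    if "strict_mono r" "weak_cluster_point (xs \<circ> r) x'" for r x'
  proof -
    have "(\<lambda>n. blinfun_apply T ((xs \<circ> r) n)) \<longlonglongrightarrow> y"
      using LIMSEQ_subseq_LIMSEQ[OF lim \<open>strict_mono r\<close>] by (simp add: o_def)
    thus ?thesis
      using weak_cluster_point_norming_preimage[of T "xs \<circ> r" x' y] that(2) unit norm_T \<open>norm y = 1\<close>
      by simp
  qed
  obtain x where "weak_cluster_point xs x"
    using reflexive_bounded_weak_cluster_point[OF refl, of xs 1] bounded by blast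
  hence Tx: "blinfun_apply T x = y" and "norm x = 1"
    using preimage[OF strict_mono_id, of x] by simp_all
  have "y \<noteq> - y"
    using \<open>norm y = 1\<close> by (metis norm_zero one_neq_neg_one scaleR_cancel_right scaleR_left.minus scaleR_one)
  have "x' = x" if "strict_mono r" "weak_cluster_point (xs \<circ> r) x'" for r x'
  proof -
    have Tx': "blinfun_apply T x' = y" and "norm x' = 1"
      using preimage[OF that] by auto
    hence "x' = x \<or> x' = - x"
      using smooth_point_norming_vectors_eq_up_to_sign[OF smooth norm_T \<open>norm x = 1\<close>] Tx \<open>norm y = 1\<close>
      by simp
    moreover have "x' \<noteq> - x"
      using Tx Tx' \<open>y \<noteq> - y\<close> by (auto simp: blinfun.minus_right)
    ultimately show "x' = x" by simp
  qed
  hence "weakly_tendsto xs x"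
    using weakly_tendsto_if_unique_weak_cluster_point[OF refl, of xs 1] bounded by blast
  thus ?thesis
    using Tx \<open>norm x = 1\<close> by blast
qed

lemma norming_sequence_has_convergent_subseq:
  assumes unit: "\<And>n. norm (xs n) = 1" and norming: "(\<lambda>n. norm (blinfun_apply T (xs n))) \<longlonglongrightarrow> 1"
  shows "\<exists>r x. strict_mono r \<and> norm x = 1 \<and> norm (blinfun_apply T x) = 1 \<and> (xs \<circ> r) \<longlonglongrightarrow> x"
proof -
  have "blinfun_apply T (xs n) \<in> closure (blinfun_apply T ` cball 0 1)" for n
    using unit[of n] closure_subset by fastforce
  then obtain r y where r: "strict_mono r" and lim: "(\<lambda>n. blinfun_apply T ((xs \<circ> r) n)) \<longlonglongrightarrow> y"
    using compact_imp_seq_compact[OF compact[unfolded compact_op_def]] unfolding seq_compact_def o_def by meson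
  have "norm y = 1"
    using tendsto_norm[OF lim] LIMSEQ_subseq_LIMSEQ[OF norming r] LIMSEQ_unique by (auto simp: o_def)
  then obtain x where "norm x = 1" "blinfun_apply T x = y" and weak: "weakly_tendsto (xs \<circ> r) x"
    using norming_sequence_weakly_tendsto[of "xs \<circ> r"] unit lim by auto
  have "(\<lambda>n. norm ((xs \<circ> r) n)) \<longlonglongrightarrow> norm x"
    using unit \<open>norm x = 1\<close> by simp
  hence "(\<lambda>n. norm ((xs \<circ> r) n - x)) \<longlonglongrightarrow> 0"
    using kk weak unfolding kadets_klee_def by blast
  hence "(xs \<circ> r) \<longlonglongrightarrow> x"
    by (simp add: LIM_zero_cancel tendsto_norm_zero_iff)
  thus ?thesis
    using r \<open>norm x = 1\<close> \<open>blinfun_apply T x = y\<close> \<open>norm y = 1\<close> by blast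
qed

lemma exists_norming_vector: "\<exists>x. norm x = 1 \<and> norm (blinfun_apply T x) = 1"
proof -
  have "\<exists>x. norm x = 1 \<and> 1 - inverse (Suc n) < norm (blinfun_apply T x)" for n
    using exists_almost_norming_vector[OF norm_T] by simp
  then obtain xs where "\<And>n. norm (xs n) = 1" "\<And>n. 1 - inverse (Suc n) < norm (blinfun_apply T (xs n))"
    by metis
  thus ?thesis
    using norming_sequence_has_convergent_subseq
      norm_apply_tendsto_one[OF norm_T] by blast
qed

lemma almost_norming_vectors_near_norming_vector:
  assumes x1: "norm x1 = 1" "norm (blinfun_apply T x1) = 1" and "\<epsilon> > 0"
  shows "\<exists>\<delta>>0. \<forall>x. norm x = 1 \<and> 1 - \<delta> < norm (blinfun_apply T x) \<longrightarrow>
            norm (x - x1) < \<epsilon> \<or> norm (x + x1) < \<epsilon>"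
proof (rule ccontr)
  assume "\<not> ?thesis"
  hence "\<exists>x. norm x = 1 \<and> 1 - inverse (Suc n) < norm (blinfun_apply T x) \<and>
           \<epsilon> \<le> norm (x - x1) \<and> \<epsilon> \<le> norm (x + x1)" for n
    by (metis inverse_positive_iff_positive of_nat_0_less_iff zero_less_Suc not_le)
  then obtain xs where unit: "\<And>n. norm (xs n) = 1"
    and almost: "\<And>n. 1 - inverse (Suc n) < norm (blinfun_apply T (xs n))"
    and far: "\<And>n. \<epsilon> \<le> norm (xs n - x1) \<and> \<epsilon> \<le> norm (xs n + x1)"
    by metis
  obtain r x where x: "norm x = 1" "norm (blinfun_apply T x) = 1" and lim: "(xs \<circ> r) \<longlonglongrightarrow> x"
    using norming_sequence_has_convergent_subseq[OF unit norm_apply_tendsto_one[OF norm_T unit almost]] by blast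
  obtain n where "norm (xs (r n) - x) < \<epsilon>"
    using LIMSEQ_D[OF lim \<open>\<epsilon> > 0\<close>] by auto
  moreover have "x = x1 \<or> x = - x1"
    by (rule smooth_point_norming_vectors_eq_up_to_sign[OF smooth norm_T x1 x])
  ultimately show False
    using far[of "r n"] by auto
qed

end

section \<open>Perturbations attaining the norm at a norming vector\<close>

lemma dim_gt_one_exists_not_multiple:
  fixes w :: "'b::real_vector"
  assumes "dim_gt_one TYPE('b)"
  shows "\<exists>z. \<forall>c. z \<noteq> c *\<^sub>R w"
proof (rule ccontr)
  obtain p q :: 'b where indep: "\<And>a b. a *\<^sub>R p + b *\<^sub>R q = 0 \<Longrightarrow> a = 0 \<and> b = 0"
    using assms unfolding dim_gt_one_def by blast
  assume "\<not> ?thesis"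
  then obtain a b where p: "p = a *\<^sub>R w" and q: "q = b *\<^sub>R w" by metis
  have "b = 0 \<and> - a = 0"
    using indep[of b "- a"] unfolding p q by (simp add: algebra_simps)
  hence "1 *\<^sub>R p + 0 *\<^sub>R q = 0"
    unfolding p by simp
  thus False using indep[of 1 0] by simp
qed

lemma exists_unit_vector_near:
  fixes w :: "'b::real_normed_vector"
  assumes "dim_gt_one TYPE('b)" and "norm w = 1" and "\<epsilon> > 0"
  shows "\<exists>w'. norm w' = 1 \<and> w' \<noteq> w \<and> norm (w' - w) < \<epsilon>"
proof -
  obtain z where z: "\<And>c. z \<noteq> c *\<^sub>R w"
    using dim_gt_one_exists_not_multiple[OF assms(1)] by blast
  have not_multiple: "w + t *\<^sub>R z \<noteq> c *\<^sub>R w" if "t \<noteq> 0" for t c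
  proof
    assume "w + t *\<^sub>R z = c *\<^sub>R w"
    hence "t *\<^sub>R z = (c - 1) *\<^sub>R w"
      by (simp add: algebra_simps)
    hence "inverse t *\<^sub>R t *\<^sub>R z = inverse t *\<^sub>R (c - 1) *\<^sub>R w"
      by simp
    thus False using z that by simp
  qed
  have "((\<lambda>t. sgn (w + t *\<^sub>R z)) \<longlongrightarrow> sgn (w + 0 *\<^sub>R z)) (at 0)"
    using \<open>norm w = 1\<close> by (intro tendsto_sgn tendsto_intros) auto
  hence "eventually (\<lambda>t. dist (sgn (w + t *\<^sub>R z)) w < \<epsilon>) (at (0::real))"
    using \<open>norm w = 1\<close> \<open>\<epsilon> > 0\<close> by (auto simp: sgn_div_norm dest: tendstoD)
  then obtain d where "d > 0" and close: "\<And>t. t \<noteq> 0 \<Longrightarrow> dist t 0 < d \<Longrightarrow> dist (sgn (w + t *\<^sub>R z)) w < \<epsilon>"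
    unfolding eventually_at by blast
  define v where "v = w + (d / 2) *\<^sub>R z"
  have "v \<noteq> c *\<^sub>R w" for c
    using not_multiple[of "d / 2" c] \<open>d > 0\<close> unfolding v_def by simp
  from this[of 0] this[of "norm v"] have "v \<noteq> 0" "v \<noteq> norm v *\<^sub>R w"
    by simp_all
  show ?thesis
  proof (intro exI conjI)
    show "norm (sgn v) = 1"
      using \<open>v \<noteq> 0\<close> by (simp add: norm_sgn)
    show "sgn v \<noteq> w"
    proof
      assume "sgn v = w"
      hence "norm v *\<^sub>R w = norm v *\<^sub>R (v /\<^sub>R norm v)"
        by (simp add: sgn_div_norm)
      also have "\<dots> = v"
        using \<open>v \<noteq> 0\<close> by simp
      finally show False
        using \<open>v \<noteq> norm v *\<^sub>R w\<close> by simp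
    qed
    show "norm (sgn v - w) < \<epsilon>"
      using close[of "d / 2"] \<open>d > 0\<close> unfolding v_def by (simp add: dist_norm)
  qed
qed

lemma norm_eq_one_if_attains:
  fixes A :: "'a::real_normed_vector \<Rightarrow>\<^sub>L 'b::real_normed_vector"
  assumes "norm A \<le> 1" "norm x = 1" "norm (blinfun_apply A x) = 1"
  shows "norm A = 1"
  using norm_blinfun[of A x] assms by simp

lemma convex_combination_rank_one_attains:
  fixes T :: "'a::real_normed_vector \<Rightarrow>\<^sub>L 'b::real_normed_vector" and h :: "'a \<Rightarrow>\<^sub>L real"
  assumes "norm T = 1" "norm x = 1" "norm (blinfun_apply T x) = 1"
    and "norm h \<le> 1" "blinfun_apply h x = 1" and "0 \<le> \<eta>" "\<eta> \<le> 1"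
  defines "A \<equiv> (1 - \<eta>) *\<^sub>R T + \<eta> *\<^sub>R rank_one h (blinfun_apply T x)"
  shows "norm A = 1" and "blinfun_apply A x = blinfun_apply T x"
    and "A - T = \<eta> *\<^sub>R (rank_one h (blinfun_apply T x) - T)"
proof -
  show Ax: "blinfun_apply A x = blinfun_apply T x"
    unfolding A_def using assms(5)
    by (simp add: blinfun.add_left blinfun.scaleR_left blinfun.diff_left scaleR_diff_left)
  have "norm (rank_one h (blinfun_apply T x)) \<le> 1"
    using norm_rank_one_le[of h "blinfun_apply T x"] assms(3,4) by simp
  hence "norm A \<le> (1 - \<eta>) * norm T + \<eta> * 1"
    unfolding A_def using assms(6,7)
      norm_triangle_ineq[of "(1 - \<eta>) *\<^sub>R T" "\<eta> *\<^sub>R rank_one h (blinfun_apply T x)"]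
      mult_left_mono[of "norm (rank_one h (blinfun_apply T x))" 1 \<eta>]
    by simp
  hence "norm A \<le> 1"
    using assms(1) by simp
  thus "norm A = 1"
    using norm_eq_one_if_attains[of A x] Ax assms(2,3) by simp
  show "A - T = \<eta> *\<^sub>R (rank_one h (blinfun_apply T x) - T)"
    unfolding A_def by (simp add: algebra_simps)
qed

text \<open>If T is itself the rank-one operator h \<otimes> T x for a norming functional h of x, rotate
  its range vector; otherwise move T a little towards h \<otimes> T x.\<close>
lemma exists_near_operator_attaining_at:
  fixes T :: "'a::real_normed_vector \<Rightarrow>\<^sub>L 'b::real_normed_vector"
  assumes "dim_gt_one TYPE('b)" and "norm T = 1" and x: "norm x = 1" "norm (blinfun_apply T x) = 1"
    and "\<epsilon> > 0"
  shows "\<exists>A. A \<noteq> T \<and> norm A = 1 \<and> norm (blinfun_apply A x) = 1 \<and> norm (A - T) < \<epsilon>"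
proof -
  obtain h :: "'a \<Rightarrow>\<^sub>L real" where h: "norm h \<le> 1" "blinfun_apply h x = 1"
    using exists_norming_functional[of x] x by auto
  define w where "w = blinfun_apply T x"
  have "norm w = 1" using x w_def by simp
  show ?thesis
  proof (cases "T = rank_one h w")
    case False
    define \<eta> where "\<eta> = min 1 (\<epsilon> / 4)"
    have \<eta>: "0 < \<eta>" "\<eta> \<le> 1" "\<eta> \<le> \<epsilon> / 4" using \<open>\<epsilon> > 0\<close> \<eta>_def by auto
    define A where "A = (1 - \<eta>) *\<^sub>R T + \<eta> *\<^sub>R rank_one h w"
    have "norm A = 1" "blinfun_apply A x = w" and AT: "A - T = \<eta> *\<^sub>R (rank_one h w - T)"
      using convex_combination_rank_one_attains[OF \<open>norm T = 1\<close> x h] \<eta> unfolding A_def w_def by auto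
    have "norm (rank_one h w - T) \<le> 2"
      using norm_triangle_ineq4[of "rank_one h w" T] norm_rank_one_le[of h w] h(1) \<open>norm w = 1\<close> \<open>norm T = 1\<close>
      by simp
    hence "norm (A - T) \<le> \<eta> * 2"
      unfolding AT using \<eta> by (simp add: mult_left_mono)
    moreover have "A \<noteq> T"
      using AT False \<eta> by auto
    ultimately show ?thesis
      using \<open>norm A = 1\<close> \<open>blinfun_apply A x = w\<close> \<open>norm w = 1\<close> \<eta> \<open>\<epsilon> > 0\<close>
      by (intro exI[of _ A]) auto
  next
    case True
    obtain w' where w': "norm w' = 1" "w' \<noteq> w" "norm (w' - w) < \<epsilon>"
      using exists_unit_vector_near[OF assms(1) \<open>norm w = 1\<close> \<open>\<epsilon> > 0\<close>] by blast
    have Ax: "blinfun_apply (rank_one h w') x = w'"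
      by (simp add: h(2))
    have "norm (rank_one h w') \<le> 1"
      using norm_rank_one_le[of h w'] h(1) w'(1) by simp
    hence "norm (rank_one h w') = 1"
      using norm_eq_one_if_attains x(1) Ax w'(1) by metis
    have "rank_one h w' - T = rank_one h (w' - w)"
      unfolding True by (rule blinfun_eqI) (simp add: blinfun.diff_left scaleR_diff_right)
    hence "norm (rank_one h w' - T) \<le> norm (w' - w)"
      using norm_rank_one_le[of h "w' - w"] h(1) mult_right_mono[of "norm h" 1 "norm (w' - w)"] by simp
    moreover have "rank_one h w' \<noteq> T"
      using Ax w'(2) unfolding w_def by auto
    ultimately show ?thesis
      using \<open>norm (rank_one h w') = 1\<close> Ax w' by fastforce
  qed
qed

lemma uniform_BPB_approx_if_attains_at_norming_vector:
  fixes T A :: "'a::real_normed_vector \<Rightarrow>\<^sub>L 'b::real_normed_vector"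
  assumes "\<delta> > 0"
    and near: "\<forall>x. norm x = 1 \<and> 1 - \<delta> < norm (blinfun_apply T x) \<longrightarrow> norm (x - x1) < \<epsilon> \<or> norm (x + x1) < \<epsilon>"
    and "norm x1 = 1" "norm A = 1" "norm (blinfun_apply A x1) = 1" "norm (A - T) < \<epsilon>"
  shows "uniform_BPB_approx T \<epsilon> A"
  unfolding uniform_BPB_approx_def
proof (intro conjI exI[of _ \<delta>] allI impI)
  fix x0 assume x0: "norm x0 = 1 \<and> 1 - \<delta> < norm (blinfun_apply T x0)"
  have "norm (x0 - x1) < \<epsilon> \<or> norm (x0 - - x1) < \<epsilon>"
    using near x0 by simp
  moreover have "norm (blinfun_apply A (- x1)) = 1"
    using assms(5) by (simp add: blinfun.minus_right)
  ultimately show "\<exists>u0. norm u0 = 1 \<and> norm (blinfun_apply A u0) = 1 \<and> norm (u0 - x0) < \<epsilon> \<and> norm (A - T) < \<epsilon>"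
    using assms(3-6) by (metis norm_minus_cancel norm_minus_commute)
qed (use assms in auto)

theorem theorem2p6:
  fixes T :: "'a::banach \<Rightarrow>\<^sub>L 'b::banach" and \<epsilon> :: real
  assumes "reflexive_space TYPE('a)" and "kadets_klee TYPE('a)"
    and "dim_gt_one TYPE('a)" and "dim_gt_one TYPE('b)"
    and "compact_op T" and "norm T = 1"
    and "smooth_point_in {S. compact_op S} T"
    and "\<epsilon> > 0"
  shows "\<exists>A :: 'a \<Rightarrow>\<^sub>L 'b. uniform_BPB_approx T \<epsilon> A \<and> A \<noteq> T"
proof -
  note setting = assms(1,2,5,6,7)
  obtain x1 where x1: "norm x1 = 1" "norm (blinfun_apply T x1) = 1"
    using exists_norming_vector[OF setting] by blast
  obtain \<delta> where "\<delta> > 0" and near: "\<forall>x. norm x = 1 \<and> 1 - \<delta> < norm (blinfun_apply T x) \<longrightarrow>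
      norm (x - x1) < \<epsilon> \<or> norm (x + x1) < \<epsilon>"
    using almost_norming_vectors_near_norming_vector[OF setting x1 \<open>\<epsilon> > 0\<close>] by blast
  obtain A where "A \<noteq> T" "norm A = 1" "norm (blinfun_apply A x1) = 1" "norm (A - T) < \<epsilon>"
    using exists_near_operator_attaining_at[OF assms(4,6) x1 \<open>\<epsilon> > 0\<close>] by blast
  thus ?thesis
    using uniform_BPB_approx_if_attains_at_norming_vector[OF \<open>\<delta> > 0\<close> near x1(1)] by blast
qed

end
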